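(* Let $\mathfrak{p}$ be a finitely generated proper prime ideal of $\mathcal{S}'(\mathbb{Z}^{d})$. Then there exists $\mathbf{n}_*\in\mathbb{Z}^d$ such that $\mathfrak{p}=\{f\in\mathcal{S}'(\mathbb{Z}^{d}): f(\mathbf{n}_* )=0\}$.
   Context: For $\mathbf{n}=(n_1,\dots,n_d)\in\mathbb{Z}^d$ write $\|\mathbf{n}\|:=|n_1|+\cdots+|n_d|$. $\mathcal{S}'(\mathbb{Z}^{d})$ denotes the set of all maps $f:\mathbb{Z}^d\to\mathbb{C}$ of at most polynomial growth, i.e. for which there exist a real $M>0$ and an integer $m\geq 0$ with $|f(\mathbf{n})|\leq M(1+\|\mathbf{n}\|)^m$ for all $\mathbf{n}\in\mathbb{Z}^d$. It is a commutative unital ring under pointwise addition and multiplication, with unit the constant function $1$. *)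

theory Defs
  imports "HOL-Analysis.Analysis"
begin

text \<open>Lattice points of Z^d are modelled as int ^ 'd for a finite index type 'd
  (d = CARD('d)). The l1-norm of a lattice point.\<close>
definition l1norm :: "int ^ 'd::finite \<Rightarrow> int" where
  "l1norm n = (\<Sum>i\<in>UNIV. \<bar>n $ i\<bar>)"

text \<open>The ring S'(Z^d) of complex-valued maps of at most polynomial growth
  (pointwise operations, unit the constant function 1).\<close>
definition Sprime :: "(int ^ 'd::finite \<Rightarrow> complex) set" where
  "Sprime = {f. \<exists>M::real. M > 0 \<and> (\<exists>m::nat. \<forall>n. cmod (f n) \<le> M * (1 + real_of_int (l1norm n)) ^ m)}"

definition is_ideal_S :: "(int ^ 'd::finite \<Rightarrow> complex) set \<Rightarrow> bool" where
  "is_ideal_S I \<longleftrightarrow> I \<subseteq> Sprime \<and> (\<lambda>_. 0) \<in> I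
     \<and> (\<forall>a\<in>I. \<forall>b\<in>I. (\<lambda>n. a n + b n) \<in> I)
     \<and> (\<forall>a\<in>I. \<forall>r\<in>Sprime. (\<lambda>n. r n * a n) \<in> I)"

definition is_prime_ideal_S :: "(int ^ 'd::finite \<Rightarrow> complex) set \<Rightarrow> bool" where
  "is_prime_ideal_S P \<longleftrightarrow> is_ideal_S P \<and> (\<lambda>_. 1) \<notin> P
     \<and> (\<forall>a\<in>Sprime. \<forall>b\<in>Sprime. (\<lambda>n. a n * b n) \<in> P \<longrightarrow> a \<in> P \<or> b \<in> P)"

definition fin_gen_S :: "(int ^ 'd::finite \<Rightarrow> complex) set \<Rightarrow> bool" where
  "fin_gen_S I \<longleftrightarrow> (\<exists>gs. set gs \<subseteq> Sprime \<and>
     I = {(\<lambda>n. \<Sum>i<length gs. r i n * (gs ! i) n) | r. \<forall>i<length gs. r i \<in> Sprime})"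

end

theory Submission
  imports Defs
begin

text \<open>Every Dirac function \<open>delta n\<^sub>0\<close> lies in \<open>S'\<close>, and \<open>delta n\<^sub>0 \<cdot> (1 - delta n\<^sub>0) = 0\<close>;
  so a prime ideal contains \<open>delta n\<^sub>0\<close> or \<open>1 - delta n\<^sub>0\<close>, and in the latter case it is the
  maximal ideal of functions vanishing at \<open>n\<^sub>0\<close>. It remains to see that a finitely generated
  prime ideal cannot contain every \<open>delta n\<close>. If it did, the weight \<open>H = \<Sum>\<^sub>i |g\<^sub>i|\<close> of its
  generators would be positive everywhere and would lie in the ideal, hence so would
  \<open>\<surd>H\<close> by primality. Writing \<open>\<surd>H = \<Sum>\<^sub>i r\<^sub>i g\<^sub>i\<close> with polynomially bounded \<open>r\<^sub>i\<close> gives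
  \<open>\<surd>H \<le> B H\<close> for a polynomial bound \<open>B\<close>, so \<open>1/H \<le> B\<^sup>2\<close> lies in \<open>S'\<close> and the ideal
  contains \<open>H \<cdot> (1/H) = 1\<close>.\<close>

definition delta :: "int ^ 'd::finite \<Rightarrow> int ^ 'd \<Rightarrow> complex" where
  "delta n0 n = (if n = n0 then 1 else 0)"

definition gen_S :: "(int ^ 'd::finite \<Rightarrow> complex) list \<Rightarrow> (int ^ 'd \<Rightarrow> complex) set" where
  "gen_S gs = {(\<lambda>n. \<Sum>i<length gs. r i n * (gs ! i) n) | r. \<forall>i<length gs. r i \<in> Sprime}"

definition gen_weight :: "(int ^ 'd::finite \<Rightarrow> complex) list \<Rightarrow> int ^ 'd \<Rightarrow> real" where
  "gen_weight gs n = (\<Sum>i<length gs. cmod ((gs ! i) n))"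

lemma fin_gen_S_iff: "fin_gen_S I \<longleftrightarrow> (\<exists>gs. set gs \<subseteq> Sprime \<and> I = gen_S gs)"
  unfolding fin_gen_S_def gen_S_def ..

lemma l1norm_nonneg: "l1norm n \<ge> 0"
  unfolding l1norm_def by (simp add: sum_nonneg)

lemma one_le_l1norm_weight_power: "(1::real) \<le> (1 + real_of_int (l1norm n)) ^ m"
  using l1norm_nonneg[of n] by (intro one_le_power) simp

lemma poly_bound_mono:
  assumes "cmod (f n) \<le> M * (1 + real_of_int (l1norm n)) ^ m" "M \<le> M'" "m \<le> m'"
  shows "cmod (f n) \<le> M' * (1 + real_of_int (l1norm n)) ^ m'"
proof -
  have w: "1 \<le> (1 + real_of_int (l1norm n)) ^ m"
    by (rule one_le_l1norm_weight_power)
  have "0 \<le> M * (1 + real_of_int (l1norm n)) ^ m"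
    using assms(1) norm_ge_zero[of "f n"] by linarith
  with w have "0 \<le> M"
    by (simp add: zero_le_mult_iff)
  then have "M * (1 + real_of_int (l1norm n)) ^ m \<le> M' * (1 + real_of_int (l1norm n)) ^ m'"
    using assms(2,3) w by (intro mult_mono power_increasing) (auto simp: l1norm_nonneg)
  with assms(1) show ?thesis by linarith
qed

lemma SprimeI:
  assumes "M > 0" and "\<And>n. cmod (f n) \<le> M * (1 + real_of_int (l1norm n)) ^ m"
  shows "f \<in> Sprime"
  unfolding Sprime_def using assms by blast

lemma SprimeE:
  assumes "f \<in> Sprime"
  obtains M m where "M > 0" "\<forall>n. cmod (f n) \<le> M * (1 + real_of_int (l1norm n)) ^ m"
  using assms unfolding Sprime_def mem_Collect_eq by (elim exE conjE)

lemma Sprime_bounded: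
  assumes "\<And>n. cmod (f n) \<le> B"
  shows "f \<in> Sprime"
  by (rule SprimeI[of "max B 1" _ 0]) (auto simp: assms le_max_iff_disj)

lemma delta_Sprime: "delta n0 \<in> Sprime"
  by (rule Sprime_bounded[of _ 1]) (simp add: delta_def)

lemma one_minus_delta_Sprime: "(\<lambda>n. 1 - delta n0 n) \<in> Sprime"
  by (rule Sprime_bounded[of _ 1]) (simp add: delta_def)

lemma Sprime_common_bound:
  fixes k :: nat
  assumes "\<forall>i<k. r i \<in> Sprime"
  shows "\<exists>M>0. \<exists>m. \<forall>i<k. \<forall>n. cmod (r i n) \<le> M * (1 + real_of_int (l1norm n)) ^ m"
  using assms
proof (induction k)
  case 0
  show ?case by (intro exI[of _ 1]) auto
next
  case (Suc k)
  then obtain M m where "M > 0" and M: "\<forall>i<k. \<forall>n. cmod (r i n) \<le> M * (1 + real_of_int (l1norm n)) ^ m"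
    by auto
  have "r k \<in> Sprime"
    using Suc.prems by simp
  then obtain M' m' where "M' > 0" and M': "\<forall>n. cmod (r k n) \<le> M' * (1 + real_of_int (l1norm n)) ^ m'"
    by (rule SprimeE)
  have "cmod (r i n) \<le> max M M' * (1 + real_of_int (l1norm n)) ^ max m m'" if "i < Suc k" for i n
  proof (cases "i = k")
    case True
    show ?thesis
      by (rule poly_bound_mono[where M = M' and m = m']) (use M' True in auto)
  next
    case False
    show ?thesis
      by (rule poly_bound_mono[where M = M and m = m]) (use M False \<open>i < Suc k\<close> in auto)
  qed
  with \<open>M > 0\<close> show ?case by (intro exI[of _ "max M M'"]) auto
qed

lemma Sprime_sqrt_norm:
  assumes "h \<in> Sprime"
  shows "(\<lambda>n. complex_of_real (sqrt (cmod (h n)))) \<in> Sprime"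
proof -
  obtain M m where "M > 0" and M: "\<forall>n. cmod (h n) \<le> M * (1 + real_of_int (l1norm n)) ^ m"
    using assms by (rule SprimeE)
  have "sqrt (cmod (h n)) \<le> (1 + M) * (1 + real_of_int (l1norm n)) ^ m" for n
  proof -
    have "sqrt (cmod (h n)) \<le> 1 + cmod (h n)"
      using norm_ge_zero[of "h n"] by (intro real_le_lsqrt) (auto simp: power2_eq_square algebra_simps)
    also have "\<dots> \<le> (1 + M) * (1 + real_of_int (l1norm n)) ^ m"
      using M[rule_format, of n] one_le_l1norm_weight_power[of n m] by (simp add: algebra_simps)
    finally show ?thesis .
  qed
  with \<open>M > 0\<close> show ?thesis
    by (intro SprimeI[of "1 + M" _ m]) auto
qed

lemma gen_weight_nonneg: "gen_weight gs n \<ge> 0"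
  unfolding gen_weight_def by (simp add: sum_nonneg)

lemma cnj_div_norm_mult:
  assumes "z \<noteq> 0"
  shows "cnj z / complex_of_real (cmod z) * z = complex_of_real (cmod z)"
proof -
  have "cnj z / complex_of_real (cmod z) * z = z * cnj z / complex_of_real (cmod z)"
    by (simp add: field_simps)
  also have "\<dots> = complex_of_real ((cmod z)\<^sup>2) / complex_of_real (cmod z)"
    by (simp only: complex_norm_square)
  also have "\<dots> = complex_of_real (cmod z)"
    using assms by (simp add: power2_eq_square)
  finally show ?thesis .
qed

lemma gen_weight_mem_gen_S: "(\<lambda>n. complex_of_real (gen_weight gs n)) \<in> gen_S gs"
proof -
  define r where "r i n = (if (gs ! i) n = 0 then 0 else cnj ((gs ! i) n) / cmod ((gs ! i) n))" for i n
  have r_Sprime: "r i \<in> Sprime" for i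
    by (rule Sprime_bounded[of _ 1]) (simp add: r_def norm_divide)
  have "r i n * (gs ! i) n = cmod ((gs ! i) n)" for i n
    using cnj_div_norm_mult[of "(gs ! i) n"] by (auto simp: r_def)
  then have "(\<lambda>n. complex_of_real (gen_weight gs n)) = (\<lambda>n. \<Sum>i<length gs. r i n * (gs ! i) n)"
    by (simp add: gen_weight_def)
  with r_Sprime show ?thesis
    unfolding gen_S_def by blast
qed

lemma gen_weight_pos_if_delta_mem:
  assumes "delta n0 \<in> gen_S gs"
  shows "gen_weight gs n0 > 0"
proof (rule ccontr)
  assume "\<not> gen_weight gs n0 > 0"
  then have "\<forall>i<length gs. (gs ! i) n0 = 0"
    using gen_weight_nonneg[of gs n0] by (simp add: gen_weight_def sum_nonneg_eq_0_iff)
  moreover obtain r where "delta n0 = (\<lambda>n. \<Sum>i<length gs. r i n * (gs ! i) n)"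
    using assms unfolding gen_S_def by blast
  ultimately have "delta n0 n0 = 0" by simp
  then show False by (simp add: delta_def)
qed

lemma gen_S_weighted_bound:
  assumes "f \<in> gen_S gs"
  shows "\<exists>M>0. \<exists>m. \<forall>n. cmod (f n) \<le> M * (1 + real_of_int (l1norm n)) ^ m * gen_weight gs n"
proof -
  obtain r where rS: "\<forall>i<length gs. r i \<in> Sprime" and f: "f = (\<lambda>n. \<Sum>i<length gs. r i n * (gs ! i) n)"
    using assms unfolding gen_S_def by blast
  obtain M m where "M > 0" and M: "\<forall>i<length gs. \<forall>n. cmod (r i n) \<le> M * (1 + real_of_int (l1norm n)) ^ m"
    using Sprime_common_bound[OF rS] by blast
  have "cmod (f n) \<le> M * (1 + real_of_int (l1norm n)) ^ m * gen_weight gs n" for n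
  proof -
    have "cmod (f n) \<le> (\<Sum>i<length gs. cmod (r i n) * cmod ((gs ! i) n))"
      unfolding f by (rule order_trans[OF norm_sum]) (simp add: norm_mult)
    also have "\<dots> \<le> (\<Sum>i<length gs. M * (1 + real_of_int (l1norm n)) ^ m * cmod ((gs ! i) n))"
      using M by (intro sum_mono mult_right_mono) auto
    finally show ?thesis by (simp add: gen_weight_def sum_distrib_left)
  qed
  with \<open>M > 0\<close> show ?thesis by blast
qed

lemma inverse_le_square_if_sqrt_le:
  fixes h B :: real
  assumes "h > 0" and "sqrt h \<le> B * h"
  shows "1 / h \<le> B\<^sup>2"
proof -
  define s where "s = sqrt h"
  have "s > 0" and h: "h = s\<^sup>2"
    using assms(1) by (simp_all add: s_def)
  have "s * 1 \<le> s * (B * s)"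
    using assms(2) by (simp add: s_def[symmetric] h power2_eq_square ac_simps)
  then have "1 \<le> B * s"
    using \<open>s > 0\<close> by (rule mult_left_le_imp_le)
  then have "1 \<le> (B * s)\<^sup>2"
    by (simp add: one_le_power)
  then show ?thesis
    using \<open>s > 0\<close> by (simp add: h power_mult_distrib field_simps)
qed

lemma inverse_gen_weight_Sprime:
  assumes pos: "\<And>n. gen_weight gs n > 0"
    and sqrt_mem: "(\<lambda>n. complex_of_real (sqrt (gen_weight gs n))) \<in> gen_S gs"
  shows "(\<lambda>n. complex_of_real (1 / gen_weight gs n)) \<in> Sprime"
proof -
  obtain M m where "M > 0" and bound:
    "\<forall>n. cmod (complex_of_real (sqrt (gen_weight gs n)))
      \<le> M * (1 + real_of_int (l1norm n)) ^ m * gen_weight gs n"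
    using gen_S_weighted_bound[OF sqrt_mem] by blast
  have "1 / gen_weight gs n \<le> (M * (1 + real_of_int (l1norm n)) ^ m)\<^sup>2" for n
    using pos[of n] bound[rule_format, of n] by (intro inverse_le_square_if_sqrt_le) auto
  then have "cmod (complex_of_real (1 / gen_weight gs n))
      \<le> M\<^sup>2 * (1 + real_of_int (l1norm n)) ^ (2 * m)" for n
    using pos[of n] by (simp add: norm_divide power_mult_distrib power_mult mult.commute)
  with \<open>M > 0\<close> show ?thesis
    by (intro SprimeI[of "M\<^sup>2" _ "2 * m"]) auto
qed

lemma ideal_S_subset: "is_ideal_S P \<Longrightarrow> P \<subseteq> Sprime"
  and ideal_S_zero: "is_ideal_S P \<Longrightarrow> (\<lambda>_. 0) \<in> P"
  and ideal_S_add: "is_ideal_S P \<Longrightarrow> a \<in> P \<Longrightarrow> b \<in> P \<Longrightarrow> (\<lambda>n. a n + b n) \<in> P"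
  and ideal_S_mult: "is_ideal_S P \<Longrightarrow> a \<in> P \<Longrightarrow> r \<in> Sprime \<Longrightarrow> (\<lambda>n. r n * a n) \<in> P"
  unfolding is_ideal_S_def by blast+

lemma prime_ideal_S_ideal: "is_prime_ideal_S P \<Longrightarrow> is_ideal_S P"
  and prime_ideal_S_proper: "is_prime_ideal_S P \<Longrightarrow> (\<lambda>_. 1) \<notin> P"
  and prime_ideal_S_mult_mem:
    "is_prime_ideal_S P \<Longrightarrow> a \<in> Sprime \<Longrightarrow> b \<in> Sprime \<Longrightarrow> (\<lambda>n. a n * b n) \<in> P \<Longrightarrow> a \<in> P \<or> b \<in> P"
  unfolding is_prime_ideal_S_def by blast+

lemma prime_ideal_S_delta_or_one_minus_delta:
  assumes "is_prime_ideal_S P"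
  shows "delta n0 \<in> P \<or> (\<lambda>n. 1 - delta n0 n) \<in> P"
proof -
  have "(\<lambda>n. delta n0 n * (1 - delta n0 n)) = (\<lambda>_. 0)"
    by (auto simp: delta_def)
  then have "(\<lambda>n. delta n0 n * (1 - delta n0 n)) \<in> P"
    using ideal_S_zero[OF prime_ideal_S_ideal[OF assms]] by simp
  then show ?thesis
    by (rule prime_ideal_S_mult_mem[OF assms delta_Sprime one_minus_delta_Sprime])
qed

lemma ideal_S_eq_vanishing_ideal:
  assumes ideal: "is_ideal_S P" and proper: "(\<lambda>_. 1) \<notin> P"
    and mem: "(\<lambda>n. 1 - delta n0 n) \<in> P"
  shows "P = {f \<in> Sprime. f n0 = 0}"
proof (intro equalityI subsetI)
  fix f assume f: "f \<in> {f \<in> Sprime. f n0 = 0}"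
  then have "(\<lambda>n. f n * (1 - delta n0 n)) \<in> P"
    using ideal_S_mult[OF ideal mem] by blast
  moreover have "(\<lambda>n. f n * (1 - delta n0 n)) = f"
    using f by (auto simp: delta_def)
  ultimately show "f \<in> P" by simp
next
  fix f assume f: "f \<in> P"
  have "f n0 = 0"
  proof (rule ccontr)
    assume "f n0 \<noteq> 0"
    define c where "c n = (if n = n0 then 1 / f n0 else 0)" for n
    have "c \<in> Sprime"
      by (rule Sprime_bounded[of _ "cmod (1 / f n0)"]) (simp add: c_def)
    then have "(\<lambda>n. c n * f n) \<in> P"
      by (rule ideal_S_mult[OF ideal f])
    moreover have "(\<lambda>n. c n * f n) = delta n0"
      using \<open>f n0 \<noteq> 0\<close> by (auto simp: c_def delta_def)
    ultimately have "delta n0 \<in> P"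
      by simp
    from ideal_S_add[OF ideal this mem] proper show False
      by simp
  qed
  with f ideal_S_subset[OF ideal] show "f \<in> {f \<in> Sprime. f n0 = 0}"
    by (simp add: subset_iff)
qed

lemma fin_gen_prime_ideal_S_delta_not_mem:
  assumes prime: "is_prime_ideal_S P" and "fin_gen_S P"
  shows "\<exists>n0. delta n0 \<notin> P"
proof (rule ccontr)
  assume "\<not> (\<exists>n0. delta n0 \<notin> P)"
  then have deltas: "delta n \<in> P" for n by blast
  obtain gs where P: "P = gen_S gs"
    using \<open>fin_gen_S P\<close> unfolding fin_gen_S_iff by blast
  have ideal: "is_ideal_S P"
    using prime by (rule prime_ideal_S_ideal)
  let ?H = "\<lambda>n. complex_of_real (gen_weight gs n)"
  let ?S = "\<lambda>n. complex_of_real (sqrt (gen_weight gs n))"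
  have pos: "gen_weight gs n > 0" for n
    using deltas[of n] unfolding P by (rule gen_weight_pos_if_delta_mem)
  have H: "?H \<in> P"
    unfolding P by (rule gen_weight_mem_gen_S)
  have "?S \<in> Sprime"
    using Sprime_sqrt_norm[of ?H] H ideal_S_subset[OF ideal] gen_weight_nonneg[of gs] by auto
  moreover have "(\<lambda>n. ?S n * ?S n) = ?H"
    using gen_weight_nonneg[of gs] by (auto simp flip: of_real_mult)
  ultimately have "?S \<in> P"
    using prime_ideal_S_mult_mem[OF prime, of ?S ?S] H by auto
  then have "(\<lambda>n. complex_of_real (1 / gen_weight gs n)) \<in> Sprime"
    using inverse_gen_weight_Sprime[OF pos] unfolding P by blast
  from ideal_S_mult[OF ideal H this]
  have "(\<lambda>n. complex_of_real (1 / gen_weight gs n) * ?H n) \<in> P" .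
  moreover have "gen_weight gs n \<noteq> 0" for n
    using pos[of n] by simp
  then have "(\<lambda>n. complex_of_real (1 / gen_weight gs n) * ?H n) = (\<lambda>_. 1)"
    by (simp add: fun_eq_iff flip: of_real_mult)
  ultimately show False
    using prime_ideal_S_proper[OF prime] by simp
qed

theorem theorem4p1:
  fixes P :: "(int ^ 'd::finite \<Rightarrow> complex) set"
  assumes "is_prime_ideal_S P"
    and "fin_gen_S P"
  shows "\<exists>n0 :: int ^ 'd. P = {f \<in> Sprime. f n0 = 0}"
proof -
  obtain n0 where "delta n0 \<notin> P"
    using fin_gen_prime_ideal_S_delta_not_mem[OF assms] by blast
  then have "(\<lambda>n. 1 - delta n0 n) \<in> P"
    using prime_ideal_S_delta_or_one_minus_delta[OF assms(1)] by blast
  then have "P = {f \<in> Sprime. f n0 = 0}"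
    by (rule ideal_S_eq_vanishing_ideal[OF prime_ideal_S_ideal[OF assms(1)] prime_ideal_S_proper[OF assms(1)]])
  then show ?thesis ..
qed

end
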